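(* Let $\mathbb{K}=(G_{\mathbb{K}},M_{\mathbb{K}},I_{\mathbb{K}})$ and $\mathbb{S}=(G_{\mathbb{S}},M_{\mathbb{S}},I_{\mathbb{S}})$ be formal contexts and let $\sigma\colon G_{\mathbb{K}}\to G_{\mathbb{S}}$ be a map. Define $I_\sigma\subseteq G_{\mathbb{K}}\times M_{\mathbb{S}}$ by $I_\sigma=\{(g,\sigma(g))\mid g\in G_{\mathbb{K}}\}\circ I_{\mathbb{S}}$, i.e. $(g,m)\in I_\sigma$ iff $(\sigma(g),m)\in I_{\mathbb{S}}$, and let $\mathbb{A}=\mathbb{K}\mid (G_{\mathbb{K}},M_{\mathbb{S}},I_\sigma)$ be the apposition. Then $\sigma$ is an $\mathbb{S}$-measure of $\mathbb{A}$ and $\mathrm{id}_{G_{\mathbb{K}}}$ is a $\mathbb{K}$-measure of $\mathbb{A}$.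
   Context: A formal context is a triple $(G,M,I)$ with $G$ a non-empty finite set (objects), $M$ a finite set (attributes) and $I\subseteq G\times M$. For $A\subseteq G$ let $A'=\{m\in M\mid \forall a\in A: (a,m)\in I\}$ and for $B\subseteq M$ let $B'=\{g\in G\mid \forall b\in B:(g,b)\in I\}$. An extent of $(G,M,I)$ is a set $A\subseteq G$ with $A''=A$; $\mathrm{Ext}(G,M,I)$ denotes the set of all extents. For formal contexts $\mathbb{K}=(G,M,I)$ and $\mathbb{S}=(G_{\mathbb{S}},M_{\mathbb{S}},I_{\mathbb{S}})$, a map $\sigma\colon G\to G_{\mathbb{S}}$ is an $\mathbb{S}$-measure of $\mathbb{K}$ iff for every $A\in\mathrm{Ext}(\mathbb{S})$ the preimage $\sigma^{-1}(A)=\{g\in G\mid \sigma(g)\in A\}$ is in $\mathrm{Ext}(\mathbb{K})$. The apposition of two contexts $(G,M_1,I_1)$ and $(G,M_2,I_2)$ on the same object set is $(G, M_1\cup M_2, I_1\cup I_2)$, where if $M_1\cap M_2\neq\emptyset$ the attribute sets are first made disjoint (disjoint union). *)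

theory Defs
  imports Main
begin

type_synonym ('g, 'm) fcontext = "'g set \<times> 'm set \<times> ('g \<times> 'm) set"

definition formal_context :: "('g, 'm) fcontext \<Rightarrow> bool" where
  "formal_context K = (case K of (G, M, I) \<Rightarrow>
     G \<noteq> {} \<and> finite G \<and> finite M \<and> I \<subseteq> G \<times> M)"

definition obj_deriv :: "('g, 'm) fcontext \<Rightarrow> 'g set \<Rightarrow> 'm set" where
  "obj_deriv K A = (case K of (G, M, I) \<Rightarrow> {m \<in> M. \<forall>a\<in>A. (a, m) \<in> I})"

definition attr_deriv :: "('g, 'm) fcontext \<Rightarrow> 'm set \<Rightarrow> 'g set" where
  "attr_deriv K B = (case K of (G, M, I) \<Rightarrow> {g \<in> G. \<forall>b\<in>B. (g, b) \<in> I})"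

definition Ext :: "('g, 'm) fcontext \<Rightarrow> 'g set set" where
  "Ext K = {A. attr_deriv K (obj_deriv K A) = A}"

definition is_measure :: "('g, 'm) fcontext \<Rightarrow> ('h, 'n) fcontext \<Rightarrow> ('g \<Rightarrow> 'h) \<Rightarrow> bool" where
  "is_measure K S \<sigma> = (case K of (G, M, I) \<Rightarrow> case S of (GS, MS, IS) \<Rightarrow>
     (\<forall>g\<in>G. \<sigma> g \<in> GS) \<and> (\<forall>A\<in>Ext S. {g \<in> G. \<sigma> g \<in> A} \<in> Ext K))"

text \<open>Apposition of two contexts on the same object set (the object set of the first is used);
  attribute sets are made disjoint via the disjoint sum.\<close>
definition apposition :: "('g, 'm) fcontext \<Rightarrow> ('g, 'n) fcontext \<Rightarrow> ('g, 'm + 'n) fcontext" where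
  "apposition K1 K2 = (case K1 of (G, M1, I1) \<Rightarrow> case K2 of (G2, M2, I2) \<Rightarrow>
     (G, M1 <+> M2, {(g, Inl m) | g m. (g, m) \<in> I1} \<union> {(g, Inr m) | g m. (g, m) \<in> I2}))"

end

theory Submission
  imports Defs
begin

(* The extents of a context are exactly the sets B' with B a set of attributes. In the
   apposition A = K | (G_K, M_S, I_sigma) the attribute sets Inl ` B and Inr ` C derive to the
   derivations of B in K and of C in (G_K, M_S, I_sigma), so every extent of either component
   is an extent of A. The extents of K are their own id-preimages, and the sigma-preimage of
   an extent B' of S is the derivation of B in (G_K, M_S, I_sigma). *)

lemma attr_deriv_in_Ext:
  assumes "B \<subseteq> M"
  shows "attr_deriv (G, M, I) B \<in> Ext (G, M, I)"
  using assms unfolding Ext_def attr_deriv_def obj_deriv_def by blast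

lemma Ext_eq_attr_deriv_image: "Ext (G, M, I) = attr_deriv (G, M, I) ` Pow M"
proof
  show "Ext (G, M, I) \<subseteq> attr_deriv (G, M, I) ` Pow M"
  proof
    fix A assume "A \<in> Ext (G, M, I)"
    then have "A = attr_deriv (G, M, I) (obj_deriv (G, M, I) A)"
      by (simp add: Ext_def)
    moreover have "obj_deriv (G, M, I) A \<in> Pow M"
      by (auto simp: obj_deriv_def)
    ultimately show "A \<in> attr_deriv (G, M, I) ` Pow M" by blast
  qed
qed (auto intro: attr_deriv_in_Ext)

lemma Ext_subset: "A \<in> Ext (G, M, I) \<Longrightarrow> A \<subseteq> G"
  by (auto simp: Ext_eq_attr_deriv_image attr_deriv_def)

lemma attr_deriv_apposition_Inl:
  "attr_deriv (apposition (G, M1, I1) (G, M2, I2)) (Inl ` B) = attr_deriv (G, M1, I1) B"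
  by (auto simp: apposition_def attr_deriv_def)

lemma attr_deriv_apposition_Inr:
  "attr_deriv (apposition (G, M1, I1) (G, M2, I2)) (Inr ` C) = attr_deriv (G, M2, I2) C"
  by (auto simp: apposition_def attr_deriv_def)

lemma Ext_apposition_left:
  "Ext (G, M1, I1) \<subseteq> Ext (apposition (G, M1, I1) (G, M2, I2))"
proof
  fix A assume "A \<in> Ext (G, M1, I1)"
  then obtain B where "B \<subseteq> M1" and A: "A = attr_deriv (G, M1, I1) B"
    by (auto simp: Ext_eq_attr_deriv_image)
  then have "Inl ` B \<subseteq> M1 <+> M2" by blast
  then have "attr_deriv (apposition (G, M1, I1) (G, M2, I2)) (Inl ` B)
      \<in> Ext (apposition (G, M1, I1) (G, M2, I2))"
    by (simp add: apposition_def attr_deriv_in_Ext)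
  then show "A \<in> Ext (apposition (G, M1, I1) (G, M2, I2))"
    by (simp add: A attr_deriv_apposition_Inl)
qed

lemma Ext_apposition_right:
  "Ext (G, M2, I2) \<subseteq> Ext (apposition (G, M1, I1) (G, M2, I2))"
proof
  fix A assume "A \<in> Ext (G, M2, I2)"
  then obtain C where "C \<subseteq> M2" and A: "A = attr_deriv (G, M2, I2) C"
    by (auto simp: Ext_eq_attr_deriv_image)
  then have "Inr ` C \<subseteq> M1 <+> M2" by blast
  then have "attr_deriv (apposition (G, M1, I1) (G, M2, I2)) (Inr ` C)
      \<in> Ext (apposition (G, M1, I1) (G, M2, I2))"
    by (simp add: apposition_def attr_deriv_in_Ext)
  then show "A \<in> Ext (apposition (G, M1, I1) (G, M2, I2))"
    by (simp add: A attr_deriv_apposition_Inr)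
qed

lemma attr_deriv_pullback:
  assumes "\<forall>g\<in>G. \<sigma> g \<in> GS"
  shows "attr_deriv (G, M, {(g, m) | g m. g \<in> G \<and> (\<sigma> g, m) \<in> IS}) B
    = {g \<in> G. \<sigma> g \<in> attr_deriv (GS, M, IS) B}"
  using assms by (auto simp: attr_deriv_def)

lemma preimage_in_Ext_pullback:
  assumes "\<forall>g\<in>G. \<sigma> g \<in> GS" and "A \<in> Ext (GS, M, IS)"
  shows "{g \<in> G. \<sigma> g \<in> A} \<in> Ext (G, M, {(g, m) | g m. g \<in> G \<and> (\<sigma> g, m) \<in> IS})"
proof -
  from assms(2) obtain B where "B \<subseteq> M" and A: "A = attr_deriv (GS, M, IS) B"
    by (auto simp: Ext_eq_attr_deriv_image)
  then have "{g \<in> G. \<sigma> g \<in> A}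
      = attr_deriv (G, M, {(g, m) | g m. g \<in> G \<and> (\<sigma> g, m) \<in> IS}) B"
    by (simp only: A attr_deriv_pullback[OF assms(1)])
  with \<open>B \<subseteq> M\<close> show ?thesis
    by (simp add: attr_deriv_in_Ext)
qed

theorem proposition2:
  fixes GK :: "'g set" and MK :: "'m set" and IK :: "('g \<times> 'm) set"
    and GS :: "'h set" and MS :: "'n set" and IS :: "('h \<times> 'n) set"
    and \<sigma> :: "'g \<Rightarrow> 'h"
  assumes "formal_context (GK, MK, IK)"
    and "formal_context (GS, MS, IS)"
    and "\<forall>g\<in>GK. \<sigma> g \<in> GS"
  defines "I\<sigma> \<equiv> {(g, m) | g m. g \<in> GK \<and> (\<sigma> g, m) \<in> IS}"
  defines "\<A> \<equiv> apposition (GK, MK, IK) (GK, MS, I\<sigma>)"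
  shows "is_measure \<A> (GS, MS, IS) \<sigma> \<and> is_measure \<A> (GK, MK, IK) id"
proof -
  \<comment> \<open>Neither context needs to be finite or to satisfy I \<subseteq> G \<times> M: the first two assumptions are unused.\<close>
  obtain I\<A> where \<A>_objects: "\<A> = (GK, MK <+> MS, I\<A>)"
    by (simp add: \<A>_def apposition_def)
  have "{g \<in> GK. \<sigma> g \<in> A} \<in> Ext \<A>" if "A \<in> Ext (GS, MS, IS)" for A
    using Ext_apposition_right[of GK MS I\<sigma> MK IK]
      preimage_in_Ext_pullback[OF assms(3) that]
    unfolding \<A>_def I\<sigma>_def by (rule subsetD)
  moreover have "{g \<in> GK. id g \<in> A} \<in> Ext \<A>" if "A \<in> Ext (GK, MK, IK)" for A
  proof -
    have "{g \<in> GK. id g \<in> A} = A"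
      using Ext_subset[OF that] by auto
    with that show ?thesis
      using Ext_apposition_left[of GK MK IK MS I\<sigma>] unfolding \<A>_def by auto
  qed
  ultimately show ?thesis
    using assms(3) by (simp add: \<A>_objects is_measure_def)
qed

end
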